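(* Let $k\ge 5$ and $k<n\le k+2$. Then there is no antipodal $k$-splitting of $Q_2^n$.
   Context: $Q_2^n=\{0,1\}^n$. For $0\le m\le n$, an $m$-face of $Q_2^n$ is given by a tuple $a=(a_1,\dots,a_n)\in\{0,1,*\}^n$ with exactly $m$ entries equal to $*$; it denotes the set $\{x\in Q_2^n : x_i=a_i \text{ whenever } a_i\in\{0,1\}\}$. The direction of a face is the set of positions of its asterisks; two faces are parallel if they have the same direction, and two parallel faces $a,b$ are antipodal if $b_i=1-a_i$ at every non-asterisk position $i$. An antipodal $k$-splitting of $Q_2^n$ is a collection of exactly $2^k$ $(n-k)$-faces whose union is $Q_2^n$ and which contains no pair of parallel non-antipodal faces. *)

theory Defs
  imports Main
begin

text \<open>Vertices of Q_2^n: 0/1 lists of length n.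
 Faces: lists over {0,1,*} of length n, where None encodes * and Some b encodes b in {0,1}.\<close>

definition cube :: "nat \<Rightarrow> nat list set" where
  "cube n = {x. length x = n \<and> set x \<subseteq> {0, 1}}"

definition is_face :: "nat \<Rightarrow> nat \<Rightarrow> nat option list \<Rightarrow> bool" where
  "is_face n m a \<longleftrightarrow> length a = n \<and> (\<forall>i<n. a ! i \<in> {None, Some 0, Some 1})
     \<and> card {i. i < n \<and> a ! i = None} = m"

definition face_set :: "nat option list \<Rightarrow> nat list set" where
  "face_set a = {x \<in> cube (length a). \<forall>i<length a. \<forall>b. a ! i = Some b \<longrightarrow> x ! i = b}"

definition direction :: "nat option list \<Rightarrow> nat set" where
  "direction a = {i. i < length a \<and> a ! i = None}"

definition parallel :: "nat option list \<Rightarrow> nat option list \<Rightarrow> bool" where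
  "parallel a b \<longleftrightarrow> length a = length b \<and> direction a = direction b"

definition antipodal :: "nat option list \<Rightarrow> nat option list \<Rightarrow> bool" where
  "antipodal a b \<longleftrightarrow> parallel a b \<and>
     (\<forall>i<length a. \<forall>c. a ! i = Some c \<longrightarrow> b ! i = Some (1 - c))"

definition antipodal_splitting :: "nat \<Rightarrow> nat \<Rightarrow> nat option list set \<Rightarrow> bool" where
  "antipodal_splitting n k S \<longleftrightarrow>
     finite S \<and> card S = 2 ^ k \<and> (\<forall>a\<in>S. is_face n (n - k) a) \<and>
     (\<Union>a\<in>S. face_set a) = cube n \<and>
     (\<forall>a\<in>S. \<forall>b\<in>S. parallel a b \<longrightarrow> a = b \<or> antipodal a b)"

end

theory Submission
  imports Defs
begin

(* In an antipodal k-splitting the faces of a given direction are a face and possibly its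
   antipode, so 2^k <= 2 C(n, n-k); this already fails for n = k + 1 and for n = k + 2, k >= 6.
   In the remaining case n = 7, k = 5 the 32 two-dimensional faces have 4 points each and hence
   partition the cube, so every nontrivial Walsh character sums to 0 over the faces. Summing the
   character supported off a direction D shows that each occupied direction carries an
   antipodal pair; summing the character supported off three coordinates i, j, l (n - 3 being
   even, both faces of a pair then contribute the same sign) shows that an even number of the
   directions {i,j}, {i,l}, {j,l} is occupied. So the occupied directions are the edges of a
   complete bipartite graph K(m, 7 - m), and 32 = 2 m (7 - m) has no solution. *)

fun walsh :: "bool list \<Rightarrow> nat list \<Rightarrow> int" where
  "walsh (m # ms) (x # xs) = (if m \<and> x = 1 then - walsh ms xs else walsh ms xs)"
| "walsh _ _ = 1"

fun face_sign :: "bool list \<Rightarrow> nat option list \<Rightarrow> int" where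
  "face_sign (m # ms) (c # a) = (if m \<and> c = Some 1 then - face_sign ms a else face_sign ms a)"
| "face_sign _ _ = 1"

fun selects_free :: "bool list \<Rightarrow> nat option list \<Rightarrow> bool" where
  "selects_free (m # ms) (c # a) \<longleftrightarrow> m \<and> c = None \<or> selects_free ms a"
| "selects_free _ _ \<longleftrightarrow> False"

lemma face_sign_cases: "face_sign ms a = 1 \<or> face_sign ms a = -1"
  by (induction ms a rule: face_sign.induct) auto

lemma selects_free_iff:
  "length ms = length a \<Longrightarrow> selects_free ms a \<longleftrightarrow> (\<exists>i<length a. ms ! i \<and> a ! i = None)"
proof (induction ms a rule: selects_free.induct)
  case (1 m ms c a)
  then show ?case by (auto simp: Ex_less_Suc2)
qed auto

lemma face_set_Nil: "face_set [] = {[]}"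
  by (auto simp: face_set_def cube_def)

lemma mem_face_set_Cons: "x \<in> face_set (c # a) \<longleftrightarrow>
  (\<exists>y ys. x = y # ys \<and> y \<in> {0, 1} \<and> (\<forall>b. c = Some b \<longrightarrow> y = b) \<and> ys \<in> face_set a)"
  by (cases x) (auto simp: face_set_def cube_def All_less_Suc2)

lemma face_set_Some: "face_set (Some b # a) = (if b \<in> {0, 1} then Cons b ` face_set a else {})"
  by (auto simp: mem_face_set_Cons)

lemma face_set_None: "face_set (None # a) = Cons 0 ` face_set a \<union> Cons 1 ` face_set a"
  by (auto simp: mem_face_set_Cons)

lemma finite_face_set: "finite (face_set a)"
proof (induction a)
  case (Cons c a)
  then show ?case by (cases c) (auto simp: face_set_Some face_set_None)
qed (simp add: face_set_Nil)

lemma sum_walsh_face_set: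
  assumes "set a \<subseteq> {None, Some 0, Some 1}" and "length ms = length a"
  shows "(\<Sum>x\<in>face_set a. walsh ms x) =
    (if selects_free ms a then 0 else 2 ^ count_list a None * face_sign ms a)"
  using assms
proof (induction a arbitrary: ms)
  case Nil
  then show ?case by (simp add: face_set_Nil)
next
  case (Cons c a)
  then obtain m ms' where ms: "ms = m # ms'" and IH:
    "(\<Sum>x\<in>face_set a. walsh ms' x) =
       (if selects_free ms' a then 0 else 2 ^ count_list a None * face_sign ms' a)"
    by (cases ms) auto
  consider "c = None" | b where "c = Some b" "b \<in> {0, 1}"
    using Cons.prems(1) by auto
  then show ?case
  proof cases
    case 1
    have "(\<Sum>x\<in>face_set (c # a). walsh ms x) =
        (\<Sum>x\<in>face_set a. walsh ms (0 # x)) + (\<Sum>x\<in>face_set a. walsh ms (1 # x))"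
      unfolding 1 face_set_None
      by (subst sum.union_disjoint) (auto simp: finite_face_set sum.reindex)
    also have "\<dots> = (if m then 0 else 2 * (\<Sum>x\<in>face_set a. walsh ms' x))"
      by (simp add: ms sum_negf)
    finally show ?thesis using 1 IH by (simp add: ms)
  next
    case 2
    have "(\<Sum>x\<in>face_set (c # a). walsh ms x) = (\<Sum>x\<in>face_set a. walsh ms (b # x))"
      using 2 by (simp add: face_set_Some sum.reindex)
    also have "\<dots> = (if m \<and> b = 1 then - 1 else 1) * (\<Sum>x\<in>face_set a. walsh ms' x)"
      by (auto simp: ms sum_negf)
    finally show ?thesis using 2 IH by (simp add: ms)
  qed
qed

lemma walsh_eq_1: "True \<notin> set ms \<Longrightarrow> walsh ms x = 1"
  by (induction ms x rule: walsh.induct) auto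

lemma face_sign_eq_1: "True \<notin> set ms \<Longrightarrow> face_sign ms a = 1"
  by (induction ms a rule: face_sign.induct) auto

lemma not_selects_free: "True \<notin> set ms \<Longrightarrow> \<not> selects_free ms a"
  by (induction ms a rule: selects_free.induct) auto

lemma card_face_set:
  assumes "set a \<subseteq> {None, Some 0, Some 1}"
  shows "card (face_set a) = 2 ^ count_list a None"
proof -
  let ?ms = "replicate (length a) False"
  have "int (card (face_set a)) = (\<Sum>x\<in>face_set a. walsh ?ms x)"
    by (simp add: walsh_eq_1)
  also have "\<dots> = 2 ^ count_list a None"
    using sum_walsh_face_set[OF assms, of ?ms] by (simp add: face_sign_eq_1 not_selects_free)
  finally show ?thesis by (simp flip: of_nat_eq_iff)
qed

lemma cube_eq_face_set: "cube n = face_set (replicate n None)"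
  by (auto simp: face_set_def)

lemma count_list_replicate_same: "count_list (replicate n x) x = n"
  by (induction n) simp_all

lemma card_cube: "card (cube n) = 2 ^ n"
  by (simp add: cube_eq_face_set card_face_set count_list_replicate_same set_replicate_conv_if)

lemma finite_cube: "finite (cube n)"
  by (simp add: cube_eq_face_set finite_face_set)

lemma sum_walsh_cube:
  assumes "length ms = n" and "True \<in> set ms"
  shows "(\<Sum>x\<in>cube n. walsh ms x) = 0"
proof -
  have "selects_free ms (replicate n None)"
    using assms by (auto simp: selects_free_iff in_set_conv_nth)
  then show ?thesis
    using sum_walsh_face_set[of "replicate n None" ms] assms
    by (simp add: cube_eq_face_set set_replicate_conv_if)
qed

definition antipode :: "nat option list \<Rightarrow> nat option list" where
  "antipode a = map (map_option (\<lambda>c. 1 - c)) a"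

definition outside :: "nat \<Rightarrow> nat set \<Rightarrow> bool list" where
  "outside n U = map (\<lambda>i. i \<notin> U) [0..<n]"

lemma count_list_eq_length_filter: "count_list xs x = length (filter (\<lambda>y. y = x) xs)"
  by (induction xs) simp_all

lemma count_list_None_eq_card_direction: "count_list a None = card (direction a)"
  by (simp add: count_list_eq_length_filter length_filter_conv_card direction_def)

lemma is_faceD:
  assumes "is_face n m a"
  shows "length a = n" and "set a \<subseteq> {None, Some 0, Some 1}" and "count_list a None = m"
proof -
  show "length a = n"
    using assms by (simp add: is_face_def)
  show "count_list a None = m"
    using assms by (simp add: is_face_def count_list_None_eq_card_direction direction_def)
  have "list_all (\<lambda>c. c \<in> {None, Some 0, Some 1}) a"
    using assms unfolding is_face_def list_all_length by blast
  then show "set a \<subseteq> {None, Some 0, Some 1}"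
    unfolding list_all_iff by blast
qed

lemma direction_subset: "direction a \<subseteq> {..<length a}"
  by (auto simp: direction_def)

lemma antipodal_imp_eq_antipode:
  assumes "antipodal a b"
  shows "b = antipode a"
proof (rule nth_equalityI)
  have len: "length b = length a" and dir: "direction b = direction a"
    using assms by (auto simp: antipodal_def parallel_def)
  then show "length b = length (antipode a)"
    by (simp add: antipode_def)
  fix i assume "i < length b"
  then have i: "i < length a" using len by simp
  show "b ! i = antipode a ! i"
  proof (cases "a ! i")
    case None
    then have "i \<in> direction b" using dir i by (simp add: direction_def)
    then show ?thesis using None i by (simp add: direction_def antipode_def)
  next
    case (Some c)
    then show ?thesis using assms i by (simp add: antipodal_def antipode_def)
  qed
qed

lemma direction_antipode: "direction (antipode a) = direction a"
  by (auto simp: direction_def antipode_def)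

lemma antipode_eq_self_iff:
  assumes "set a \<subseteq> {None, Some 0, Some 1}"
  shows "antipode a = a \<longleftrightarrow> direction a = {..<length a}"
proof -
  have "antipode a = a \<longleftrightarrow> (\<forall>i<length a. map_option (\<lambda>c. 1 - c) (a ! i) = a ! i)"
    by (simp add: antipode_def list_eq_iff_nth_eq)
  also have "\<dots> \<longleftrightarrow> (\<forall>i<length a. a ! i = None)"
  proof -
    have "a ! i \<in> {None, Some 0, Some 1}" if "i < length a" for i
      using assms nth_mem[OF that] by blast
    then show ?thesis by force
  qed
  finally show ?thesis
    by (auto simp: direction_def)
qed

lemma face_sign_antipode:
  assumes "set a \<subseteq> {None, Some 0, Some 1}" and "length ms = length a" and "\<not> selects_free ms a"
  shows "face_sign ms (antipode a) = (-1) ^ count_list ms True * face_sign ms a"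
  using assms
proof (induction a arbitrary: ms)
  case (Cons c a)
  then obtain m ms' where ms: "ms = m # ms'" by (cases ms) auto
  with Cons have IH: "face_sign ms' (antipode a) = (-1) ^ count_list ms' True * face_sign ms' a"
    by simp
  have "c = None \<or> c = Some 0 \<or> c = Some 1" "m \<longrightarrow> c \<noteq> None"
    using Cons.prems ms by auto
  then show ?case
    using IH by (cases m) (auto simp: ms antipode_def)
qed (simp add: antipode_def)

lemma length_outside [simp]: "length (outside n U) = n"
  by (simp add: outside_def)

lemma selects_free_outside_iff:
  assumes "length a = n"
  shows "selects_free (outside n U) a \<longleftrightarrow> \<not> direction a \<subseteq> U"
  using assms by (auto simp: selects_free_iff outside_def direction_def)

lemma count_list_outside:
  assumes "U \<subseteq> {..<n}"
  shows "count_list (outside n U) True = n - card U"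
proof -
  have "count_list (outside n U) True = card {i. i < n \<and> i \<notin> U}"
    by (simp add: count_list_eq_length_filter outside_def length_filter_conv_card cong: conj_cong)
  also have "{i. i < n \<and> i \<notin> U} = {..<n} - U"
    by auto
  finally show ?thesis
    using assms by (simp add: card_Diff_subset finite_subset)
qed

definition complete_bipartite_edges :: "'a set \<Rightarrow> 'a set \<Rightarrow> 'a set set" where
  "complete_bipartite_edges A B = {{a, b} |a b. a \<in> A \<and> b \<in> B}"

lemma card_complete_bipartite_edges:
  assumes "finite A" and "finite B" and "A \<inter> B = {}"
  shows "card (complete_bipartite_edges A B) = card A * card B"
proof -
  have "complete_bipartite_edges A B = (\<lambda>(a, b). {a, b}) ` (A \<times> B)"
    by (auto simp: complete_bipartite_edges_def)
  moreover have "inj_on (\<lambda>(a, b). {a, b}) (A \<times> B)"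
    using assms(3) by (auto simp: inj_on_def doubleton_eq_iff)
  ultimately show ?thesis
    using assms(1,2) by (simp add: card_image card_cartesian_product)
qed

lemma triangle_parity_imp_complete_bipartite:
  assumes "v \<in> V" and E: "E \<subseteq> {D. D \<subseteq> V \<and> card D = 2}"
    and triangle: "\<And>i j l. i \<in> V \<Longrightarrow> j \<in> V \<Longrightarrow> l \<in> V \<Longrightarrow>
      i \<noteq> j \<Longrightarrow> i \<noteq> l \<Longrightarrow> j \<noteq> l \<Longrightarrow> {j, l} \<in> E \<longleftrightarrow> ({i, j} \<in> E \<longleftrightarrow> {i, l} \<notin> E)"
  shows "\<exists>A\<subseteq>V. E = complete_bipartite_edges A (V - A)"
proof -
  define A where "A = {u \<in> V. u = v \<or> {v, u} \<notin> E}"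
  have B: "V - A = {u \<in> V. u \<noteq> v \<and> {v, u} \<in> E}"
    by (auto simp: A_def)
  have "E = complete_bipartite_edges A (V - A)"
  proof
    show "E \<subseteq> complete_bipartite_edges A (V - A)"
    proof
      fix D assume "D \<in> E"
      then obtain x y where D: "D = {x, y}" "x \<noteq> y" "x \<in> V" "y \<in> V"
        using E by (auto simp: card_2_iff)
      have "(x \<in> A \<and> y \<in> V - A) \<or> (y \<in> A \<and> x \<in> V - A)"
      proof (cases "x = v \<or> y = v")
        case True
        then show ?thesis
          using D \<open>D \<in> E\<close> by (auto simp: A_def B insert_commute)
      next
        case False
        then show ?thesis
          using D \<open>D \<in> E\<close> triangle[of v x y] \<open>v \<in> V\<close> by (auto simp: A_def B)
      qed
      then show "D \<in> complete_bipartite_edges A (V - A)"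
        using D(1) by (auto simp: complete_bipartite_edges_def insert_commute)
    qed
    show "complete_bipartite_edges A (V - A) \<subseteq> E"
    proof
      fix D assume "D \<in> complete_bipartite_edges A (V - A)"
      then obtain a b where D: "D = {a, b}" "a \<in> A" "b \<in> V - A"
        by (auto simp: complete_bipartite_edges_def)
      then show "D \<in> E"
        using triangle[of v a b] \<open>v \<in> V\<close> by (cases "a = v") (auto simp: A_def B)
    qed
  qed
  moreover have "A \<subseteq> V"
    by (auto simp: A_def)
  ultimately show ?thesis
    by blast
qed

lemma disjoint_if_sum_card_eq_card_Union:
  assumes "finite I" and "finite X" and cover: "(\<Union>i\<in>I. A i) = X"
    and sum_card: "(\<Sum>i\<in>I. card (A i)) = card X"
    and "i \<in> I" and "j \<in> I" and "i \<noteq> j"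
  shows "A i \<inter> A j = {}"
proof -
  define covers where "covers x = card {i \<in> I. x \<in> A i}" for x
  have "(\<Sum>x\<in>X. covers x) = (\<Sum>i\<in>I. card {x \<in> X. x \<in> A i})"
    unfolding covers_def by (rule sum_multicount_gen[symmetric]) (simp_all add: assms(1,2))
  also have "\<dots> = (\<Sum>i\<in>I. card (A i))"
    using cover by (intro sum.cong refl arg_cong[where f = card]) blast
  also have "\<dots> = (\<Sum>x\<in>X. 1)"
    using sum_card by simp
  finally have sum_covers: "(\<Sum>x\<in>X. covers x) = (\<Sum>x\<in>X. 1)" .
  have covers_pos: "1 \<le> covers x" if "x \<in> X" for x
    using that cover \<open>finite I\<close> by (auto simp: covers_def card_gt_0_iff Suc_le_eq)
  have covers_le_1: "covers x \<le> 1" if "x \<in> X" for x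
  proof (rule ccontr)
    assume "\<not> covers x \<le> 1"
    then have "(\<Sum>x\<in>X. 1) < (\<Sum>x\<in>X. covers x)"
      using that covers_pos \<open>finite X\<close> by (intro sum_strict_mono_ex1) (auto simp: not_le)
    then show False
      using sum_covers by simp
  qed
  show ?thesis
  proof (rule ccontr)
    assume "A i \<inter> A j \<noteq> {}"
    then obtain x where x: "x \<in> A i" "x \<in> A j" by blast
    then have "x \<in> X"
      using cover \<open>i \<in> I\<close> by blast
    have "card {i, j} \<le> covers x"
      unfolding covers_def using x assms(1,5,6) by (intro card_mono) auto
    then show False
      using covers_le_1[OF \<open>x \<in> X\<close>] \<open>i \<noteq> j\<close> by simp
  qed
qed

lemma antipodal_splitting_face:
  assumes "antipodal_splitting n k S" and "F \<in> S"
  shows "length F = n" and "set F \<subseteq> {None, Some 0, Some 1}" and "card (direction F) = n - k"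
    and "card (face_set F) = 2 ^ (n - k)"
proof -
  have face: "is_face n (n - k) F"
    using assms by (simp add: antipodal_splitting_def)
  show "length F = n" and valid: "set F \<subseteq> {None, Some 0, Some 1}"
    using is_faceD[OF face] by simp_all
  show "card (direction F) = n - k" and "card (face_set F) = 2 ^ (n - k)"
    using is_faceD(3)[OF face] card_face_set[OF valid]
    by (simp_all add: count_list_None_eq_card_direction)
qed

lemma antipodal_splitting_parallel_class:
  assumes "antipodal_splitting n k S" and "F \<in> S"
  shows "{G \<in> S. direction G = direction F} \<subseteq> {F, antipode F}"
proof
  fix G assume G: "G \<in> {G \<in> S. direction G = direction F}"
  then have "parallel F G"
    using assms antipodal_splitting_face(1) by (auto simp: parallel_def)
  then have "G = F \<or> antipodal F G"
    using assms G by (auto simp: antipodal_splitting_def)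
  then show "G \<in> {F, antipode F}"
    using antipodal_imp_eq_antipode by blast
qed

lemma antipodal_splitting_disjoint:
  assumes split: "antipodal_splitting n k S" and "k \<le> n"
    and "F \<in> S" and "G \<in> S" and "F \<noteq> G"
  shows "face_set F \<inter> face_set G = {}"
proof (rule disjoint_if_sum_card_eq_card_Union[of S "cube n"])
  have "(\<Sum>F\<in>S. card (face_set F)) = 2 ^ k * 2 ^ (n - k)"
    using split antipodal_splitting_face(4)[OF split] by (simp add: antipodal_splitting_def)
  then show "(\<Sum>F\<in>S. card (face_set F)) = card (cube n)"
    using \<open>k \<le> n\<close> by (simp add: card_cube flip: power_add)
qed (use assms in \<open>simp_all add: antipodal_splitting_def finite_cube\<close>)

lemma sum_antipodal_splitting:
  assumes split: "antipodal_splitting n k S" and "k \<le> n"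
  shows "(\<Sum>F\<in>S. \<Sum>x\<in>face_set F. f x) = (\<Sum>x\<in>cube n. f x)"
proof -
  have "(\<Sum>x\<in>(\<Union>F\<in>S. face_set F). f x) = (\<Sum>F\<in>S. \<Sum>x\<in>face_set F. f x)"
    using split antipodal_splitting_disjoint[OF split \<open>k \<le> n\<close>]
    by (intro sum.UNION_disjoint) (auto simp: antipodal_splitting_def finite_face_set)
  then show ?thesis
    using split by (simp add: antipodal_splitting_def)
qed

lemma sum_face_sign_antipodal_splitting:
  assumes split: "antipodal_splitting n k S" and "k \<le> n"
    and "U \<subseteq> {..<n}" and "U \<noteq> {..<n}"
  shows "(\<Sum>F\<in>{F \<in> S. direction F \<subseteq> U}. face_sign (outside n U) F) = 0"
proof -
  let ?ms = "outside n U"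
  have fin: "finite S"
    using split by (simp add: antipodal_splitting_def)
  have "True \<in> set ?ms"
    using assms(3,4) by (auto simp: outside_def)
  then have "0 = (\<Sum>x\<in>cube n. walsh ?ms x)"
    by (simp add: sum_walsh_cube)
  also have "\<dots> = (\<Sum>F\<in>S. \<Sum>x\<in>face_set F. walsh ?ms x)"
    by (rule sum_antipodal_splitting[OF split \<open>k \<le> n\<close>, symmetric])
  also have "\<dots> = (\<Sum>F\<in>S. if direction F \<subseteq> U then 2 ^ (n - k) * face_sign ?ms F else 0)"
  proof (intro sum.cong refl)
    fix F assume "F \<in> S"
    note face = antipodal_splitting_face[OF split this]
    show "(\<Sum>x\<in>face_set F. walsh ?ms x) =
        (if direction F \<subseteq> U then 2 ^ (n - k) * face_sign ?ms F else 0)"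
      using sum_walsh_face_set[OF face(2), of ?ms] face(1,3)
      by (simp add: selects_free_outside_iff count_list_None_eq_card_direction)
  qed
  also have "\<dots> = (\<Sum>F\<in>{F \<in> S. direction F \<subseteq> U}. 2 ^ (n - k) * face_sign ?ms F)"
    by (rule sum.inter_filter[OF fin, symmetric])
  also have "\<dots> = 2 ^ (n - k) * (\<Sum>F\<in>{F \<in> S. direction F \<subseteq> U}. face_sign ?ms F)"
    by (rule sum_distrib_left[symmetric])
  finally show ?thesis
    by simp
qed

lemma antipode_mem_antipodal_splitting:
  assumes split: "antipodal_splitting n k S" and "0 < k" and "k \<le> n" and "F \<in> S"
  shows "antipode F \<in> S"
(* Otherwise F would be the only face of S with direction inside U = direction F, and the Walsh
   character supported off U would give face_sign F = 0. *)
proof (rule ccontr)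
  assume "antipode F \<notin> S"
  let ?U = "direction F"
  note face = antipodal_splitting_face[OF split]
  have U: "?U \<subseteq> {..<n}" "card ?U = n - k"
    using face[OF \<open>F \<in> S\<close>] direction_subset[of F] by simp_all
  have "?U \<noteq> {..<n}"
  proof
    assume "?U = {..<n}"
    then show False
      using U(2) \<open>0 < k\<close> \<open>k \<le> n\<close> by simp
  qed
  have "direction G = ?U" if "G \<in> S" and "direction G \<subseteq> ?U" for G
    using card_subset_eq[OF finite_subset[OF U(1)] that(2)] face(3)[OF that(1)] U(2) by simp
  then have "{G \<in> S. direction G \<subseteq> ?U} = {G \<in> S. direction G = ?U}"
    by auto
  also have "\<dots> = {F}"
    using antipodal_splitting_parallel_class[OF split \<open>F \<in> S\<close>] \<open>F \<in> S\<close> \<open>antipode F \<notin> S\<close> by auto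
  finally have "face_sign (outside n ?U) F = 0"
    using sum_face_sign_antipodal_splitting[OF split \<open>k \<le> n\<close> U(1) \<open>?U \<noteq> {..<n}\<close>] by simp
  then show False
    using face_sign_cases[of "outside n ?U" F] by simp
qed

lemma antipodal_splitting_direction_class:
  assumes split: "antipodal_splitting n k S" and "0 < k" and "k \<le> n" and "F \<in> S"
  shows "{G \<in> S. direction G = direction F} = {F, antipode F}" and "antipode F \<noteq> F"
proof -
  note face = antipodal_splitting_face[OF split \<open>F \<in> S\<close>]
  show "{G \<in> S. direction G = direction F} = {F, antipode F}"
    using antipodal_splitting_parallel_class[OF split \<open>F \<in> S\<close>] \<open>F \<in> S\<close>
      antipode_mem_antipodal_splitting[OF assms] direction_antipode[of F]
    by auto
  have "card (direction F) < n"
    using face(3) \<open>0 < k\<close> \<open>k \<le> n\<close> by simp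
  show "antipode F \<noteq> F"
  proof
    assume "antipode F = F"
    then have "direction F = {..<n}"
      using antipode_eq_self_iff[OF face(2)] face(1) by simp
    then show False
      using \<open>card (direction F) < n\<close> by simp
  qed
qed

lemma card_antipodal_splitting:
  assumes split: "antipodal_splitting n k S" and "0 < k" and "k \<le> n"
  shows "card S = 2 * card (direction ` S)"
proof -
  have fin: "finite S"
    using split by (simp add: antipodal_splitting_def)
  have "card S = (\<Sum>D\<in>direction ` S. card {F \<in> S. direction F = D})"
    using sum.image_gen[OF fin, of "\<lambda>_. 1" direction] by (simp only: card_eq_sum)
  also have "\<dots> = (\<Sum>D\<in>direction ` S. 2)"
  proof (rule sum.cong)
    fix D assume "D \<in> direction ` S"
    then obtain F where F: "F \<in> S" "D = direction F" by blast
    note pair = antipodal_splitting_direction_class[OF split \<open>0 < k\<close> \<open>k \<le> n\<close> F(1)]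
    show "card {F \<in> S. direction F = D} = 2"
      using pair(1) not_sym[OF pair(2)] F(2) by simp
  qed simp
  finally show ?thesis
    by simp
qed

lemma card_direction_image_le:
  assumes split: "antipodal_splitting n k S"
  shows "card (direction ` S) \<le> n choose (n - k)"
proof -
  have "direction ` S \<subseteq> {D. D \<subseteq> {..<n} \<and> card D = n - k}"
    using antipodal_splitting_face[OF split] direction_subset by fastforce
  then have "card (direction ` S) \<le> card {D. D \<subseteq> {..<n} \<and> card D = n - k}"
    by (intro card_mono) simp_all
  then show ?thesis
    by (simp add: n_subsets)
qed

lemma antipodal_splitting_imp_power_le_binomial:
  assumes split: "antipodal_splitting n k S" and "0 < k" and "k \<le> n"
  shows "2 ^ k \<le> 2 * (n choose (n - k))"
proof -
  have "2 ^ k = 2 * card (direction ` S)"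
    using split card_antipodal_splitting[OF assms] by (simp add: antipodal_splitting_def)
  also have "\<dots> \<le> 2 * (n choose (n - k))"
    using card_direction_image_le[OF split] by simp
  finally show ?thesis .
qed

lemma sum_face_sign_direction_class:
  assumes split: "antipodal_splitting n k S" and "0 < k" and "k \<le> n" and "F \<in> S"
    and "direction F \<subseteq> U" and "U \<subseteq> {..<n}" and "even (n - card U)"
  shows "(\<Sum>G\<in>{G \<in> S. direction G = direction F}. face_sign (outside n U) G) =
    2 * face_sign (outside n U) F"
proof -
  note face = antipodal_splitting_face[OF split \<open>F \<in> S\<close>]
  note pair = antipodal_splitting_direction_class[OF split \<open>0 < k\<close> \<open>k \<le> n\<close> \<open>F \<in> S\<close>]
  have "face_sign (outside n U) (antipode F) = face_sign (outside n U) F"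
    using face_sign_antipode[OF face(2), of "outside n U"] face(1) assms(5-7)
    by (simp add: selects_free_outside_iff count_list_outside)
  then show ?thesis
    using pair by simp
qed

lemma card_2_subset_triple:
  assumes "D \<subseteq> {i, j, l}" and "card D = 2"
  shows "D \<in> {{i, j}, {i, l}, {j, l}}"
proof -
  obtain x y where "D = {x, y}" and "x \<noteq> y"
    using assms(2) by (auto simp: card_2_iff)
  then show ?thesis
    using assms(1) by (auto simp: insert_commute)
qed

lemma antipodal_splitting_triangle:
  assumes split: "antipodal_splitting n (n - 2) S" and "odd n" and "3 < n"
    and "i < n" and "j < n" and "l < n" and "i \<noteq> j" and "i \<noteq> l" and "j \<noteq> l"
  shows "{j, l} \<in> direction ` S \<longleftrightarrow> ({i, j} \<in> direction ` S \<longleftrightarrow> {i, l} \<notin> direction ` S)"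
proof -
  define U where "U = {i, j, l}"
  define T where "T = {{i, j}, {i, l}, {j, l}}"
  define class_sum where
    "class_sum D = (\<Sum>G\<in>{G \<in> S. direction G = D}. face_sign (outside n U) G)" for D
  have fin: "finite S"
    using split by (simp add: antipodal_splitting_def)
  have U: "U \<subseteq> {..<n}" "card U = 3"
    using assms(4-9) by (auto simp: U_def)
  have "U \<noteq> {..<n}"
    using U(2) \<open>3 < n\<close> by auto
  have class_sum_cases: "(D \<in> direction ` S \<and> (class_sum D = 2 \<or> class_sum D = -2)) \<or>
      (D \<notin> direction ` S \<and> class_sum D = 0)" if "D \<subseteq> U" for D
  proof (cases "D \<in> direction ` S")
    case True
    then obtain F where "F \<in> S" "D = direction F" by blast
    then have "class_sum D = 2 * face_sign (outside n U) F"
      unfolding class_sum_def using sum_face_sign_direction_class[OF split _ _ \<open>F \<in> S\<close> _ U(1)]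
        that U(2) \<open>odd n\<close> \<open>3 < n\<close> by simp
    then show ?thesis
      using True face_sign_cases[of "outside n U" F] by auto
  next
    case False
    then have "{G \<in> S. direction G = D} = {}"
      by auto
    then have "class_sum D = 0"
      by (simp only: class_sum_def sum.empty)
    then show ?thesis
      using False by simp
  qed
  have "direction F \<in> T" if "F \<in> S" "direction F \<subseteq> U" for F
    using card_2_subset_triple[of "direction F" i j l] that(2) \<open>3 < n\<close>
      antipodal_splitting_face(3)[OF split \<open>F \<in> S\<close>]
    by (simp add: U_def T_def)
  then have "0 = (\<Sum>D\<in>T. \<Sum>F\<in>{F \<in> {F \<in> S. direction F \<subseteq> U}. direction F = D}.
      face_sign (outside n U) F)"
    using sum_face_sign_antipodal_splitting[OF split _ U(1) \<open>U \<noteq> {..<n}\<close>] fin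
    by (subst sum.group) (auto simp: T_def)
  also have "\<dots> = (\<Sum>D\<in>T. class_sum D)"
    unfolding class_sum_def by (intro sum.cong refl arg_cong[where f = "sum _"]) (auto simp: T_def U_def)
  also have "\<dots> = class_sum {i, j} + class_sum {i, l} + class_sum {j, l}"
    using assms(7-9) by (simp add: T_def doubleton_eq_iff)
  \<comment> \<open>three terms in {-2, 0, 2}, nonzero exactly for occupied directions, summing to 0\<close>
  finally show ?thesis
    using class_sum_cases[of "{i, j}"] class_sum_cases[of "{i, l}"] class_sum_cases[of "{j, l}"]
    by (auto simp: U_def)
qed

lemma card_antipodal_splitting_codim_2:
  assumes split: "antipodal_splitting n (n - 2) S" and "odd n" and "3 < n"
  shows "\<exists>m\<le>n. card S = 2 * (m * (n - m))"
proof -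
  have "\<exists>A\<subseteq>{..<n}. direction ` S = complete_bipartite_edges A ({..<n} - A)"
  proof (rule triangle_parity_imp_complete_bipartite)
    show "0 \<in> {..<n}"
      using \<open>3 < n\<close> by simp
    show "direction ` S \<subseteq> {D. D \<subseteq> {..<n} \<and> card D = 2}"
    proof
      fix D assume "D \<in> direction ` S"
      then obtain F where "F \<in> S" and D: "D = direction F"
        by blast
      note face = antipodal_splitting_face[OF split this(1)]
      show "D \<in> {D. D \<subseteq> {..<n} \<and> card D = 2}"
        using face(1,3) direction_subset[of F] D \<open>3 < n\<close> by simp
    qed
    fix i j l assume "i \<in> {..<n}" "j \<in> {..<n}" "l \<in> {..<n}" "i \<noteq> j" "i \<noteq> l" "j \<noteq> l"
    then show "{j, l} \<in> direction ` S \<longleftrightarrow> ({i, j} \<in> direction ` S \<longleftrightarrow> {i, l} \<notin> direction ` S)"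
      using antipodal_splitting_triangle[OF split \<open>odd n\<close> \<open>3 < n\<close>, of i j l] by simp
  qed
  then obtain A where A: "A \<subseteq> {..<n}"
    and E: "direction ` S = complete_bipartite_edges A ({..<n} - A)"
    by blast
  have "card S = 2 * card (direction ` S)"
    using card_antipodal_splitting[OF split] \<open>3 < n\<close> by simp
  also have "\<dots> = 2 * (card A * (n - card A))"
    using A by (simp add: E card_complete_bipartite_edges card_Diff_subset finite_subset)
  finally show ?thesis
    using card_mono[OF _ A] by auto
qed

lemma no_antipodal_splitting_7_5: "\<not> antipodal_splitting 7 5 S"
proof
  assume split: "antipodal_splitting 7 5 S"
  then obtain m where "m \<le> 7" and "card S = 2 * (m * (7 - m))"
    using card_antipodal_splitting_codim_2[of 7 S] by auto
  moreover have "card S = 32"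
    using split by (simp add: antipodal_splitting_def)
  ultimately show False
    by (simp add: le_Suc_eq numeral_eq_Suc) (elim disjE; simp)
qed

lemma linear_less_power_of_two: "5 \<le> k \<Longrightarrow> 2 * (k + 1) < (2::nat) ^ k"
  by (induction k rule: dec_induct) simp_all

lemma quadratic_less_power_of_two: "6 \<le> k \<Longrightarrow> (k + 2) * (k + 1) < (2::nat) ^ k"
proof (induction k rule: dec_induct)
  case (step k)
  then show ?case
    using linear_less_power_of_two[of k] by (simp add: algebra_simps)
qed simp

theorem proposition17:
  fixes n k :: nat
  assumes "k \<ge> 5" and "k < n" and "n \<le> k + 2"
  shows "\<not> (\<exists>S. antipodal_splitting n k S)"
proof
  assume "\<exists>S. antipodal_splitting n k S"
  then obtain S where split: "antipodal_splitting n k S" ..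
  have bound: "2 ^ k \<le> 2 * (n choose (n - k))"
    using antipodal_splitting_imp_power_le_binomial[OF split] assms by simp
  consider "n = k + 1" | "n = k + 2" "6 \<le> k" | "n = 7" "k = 5"
    using assms by linarith
  then show False
  proof cases
    case 1
    then show False
      using bound linear_less_power_of_two[OF \<open>k \<ge> 5\<close>] by simp
  next
    case 2
    then show False
      using bound quadratic_less_power_of_two[of k] by (simp add: choose_two)
  next
    case 3
    then show False
      using split no_antipodal_splitting_7_5 by simp
  qed
qed

end
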